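(* Assume the continuum hypothesis, fix a well-ordering $\lessdot$ of $[0,1]$ of order type $\omega_1$, and let $\mathcal{X}=[0,1]$, $\mathcal{H}=\{x\mapsto\mathbf 1_{x\,\underline{\lessdot}\,z}:z\in[0,1]\}$ (where $x\,\underline{\lessdot}\,z$ means $x\lessdot z$ or $x=z$). Then the ordinal Littlestone dimension satisfies $\mathrm{LD}(\mathcal{H})\ge\omega_1$ (i.e. either $\mathrm{LD}(\mathcal{H})=\mathsf\Omega$ or $\mathrm{LD}(\mathcal{H})$ is an ordinal $\ge\omega_1$).
   Context: A (finite) Littlestone tree of depth $d<\infty$ for $\mathcal{H}$ is a collection $\{x_{\mathbf u}:0\le k<d,\ \mathbf u\in\{0,1\}^k\}\subseteq\mathcal{X}$ such that for every $\mathbf y\in\{0,1\}^d$ there is $h\in\mathcal{H}$ with $h(x_{\mathbf y_{\le k}})=y_{k+1}$ for $0\le k<d$, where $\mathbf y_{\le k}=(y_1,\ldots,y_k)$; the empty tree $\varnothing$ has depth $0$. An infinite Littlestone tree is the analogous collection with $d=\infty$ (every finite initial path realized by some $h\in\mathcal{H}$). For finite Littlestone trees write $\mathbf t'\prec\mathbf t$ if $\mathbf t$ is obtained from $\mathbf t'$ by removing its leaves (deepest level). If $\mathcal{H}$ has no infinite Littlestone tree, $\prec$ is well-founded and its rank is defined by transfinite recursion: $\mathrm{rank}(\mathbf t)=0$ if no $\mathbf t'\prec\mathbf t$ exists, else $\mathrm{rank}(\mathbf t)=\sup\{\mathrm{rank}(\mathbf t')+1:\mathbf t'\prec\mathbf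 t\}$. The ordinal Littlestone dimension is $\mathrm{LD}(\mathcal{H})=-1$ if $\mathcal{H}=\varnothing$; $\mathrm{LD}(\mathcal{H})=\mathsf\Omega$ (a symbol larger than every ordinal) if $\mathcal{H}$ has an infinite Littlestone tree; and $\mathrm{LD}(\mathcal{H})=\mathrm{rank}(\varnothing)$ otherwise. $\omega_1$ is the first uncountable ordinal. *)

theory Defs
  imports Complex_Main
begin

text \<open>Finite Littlestone trees are encoded as partial maps from finite 0/1 strings
  (bool lists) to points; a tree of depth d has domain exactly the strings of length < d.
  Labels y_{k+1} correspond to y ! k (0-indexed).\<close>

definition LTree :: "'x set \<Rightarrow> ('x \<Rightarrow> bool) set \<Rightarrow> nat \<Rightarrow> (bool list \<Rightarrow> 'x option) \<Rightarrow> bool" where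
  "LTree X H d T \<longleftrightarrow> dom T = {u. length u < d} \<and> ran T \<subseteq> X \<and>
     (\<forall>y::bool list. length y = d \<longrightarrow>
        (\<exists>h\<in>H. \<forall>k<d. h (the (T (take k y))) = y ! k))"

definition finite_LTree :: "'x set \<Rightarrow> ('x \<Rightarrow> bool) set \<Rightarrow> (bool list \<Rightarrow> 'x option) \<Rightarrow> bool" where
  "finite_LTree X H T \<longleftrightarrow> (\<exists>d. LTree X H d T)"

definition LT_prec :: "'x set \<Rightarrow> ('x \<Rightarrow> bool) set \<Rightarrow> (bool list \<Rightarrow> 'x option) \<Rightarrow> (bool list \<Rightarrow> 'x option) \<Rightarrow> bool" where
  "LT_prec X H T' T \<longleftrightarrow> (\<exists>d. LTree X H d T \<and> LTree X H (Suc d) T' \<and> T = T' |` {u. length u < d})"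

definition infinite_LTree :: "'x set \<Rightarrow> ('x \<Rightarrow> bool) set \<Rightarrow> (bool list \<Rightarrow> 'x) \<Rightarrow> bool" where
  "infinite_LTree X H T \<longleftrightarrow> range T \<subseteq> X \<and>
     (\<forall>y::bool list. \<exists>h\<in>H. \<forall>k<length y. h (T (take k y)) = y ! k)"

definition has_infinite_LTree :: "'x set \<Rightarrow> ('x \<Rightarrow> bool) set \<Rightarrow> bool" where
  "has_infinite_LTree X H \<longleftrightarrow> (\<exists>T. infinite_LTree X H T)"

text \<open>Ordinals are represented by well-orders. rho is a rank function for \<prec> with values
  in the well-order W: rank(T) is the least element of W strictly above all rank(T'), T' \<prec> T,
  i.e. rank(T) = sup { rank(T') + 1 : T' \<prec> T }.\<close>
definition is_rank_function :: "'x set \<Rightarrow> ('x \<Rightarrow> bool) set \<Rightarrow> 'o rel \<Rightarrow> ((bool list \<Rightarrow> 'x option) \<Rightarrow> 'o) \<Rightarrow> bool" where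
  "is_rank_function X H W \<rho> \<longleftrightarrow> Well_order W \<and>
     (\<forall>T. finite_LTree X H T \<longrightarrow>
        \<rho> T \<in> Field W \<and>
        (\<forall>T'. LT_prec X H T' T \<longrightarrow> (\<rho> T', \<rho> T) \<in> W \<and> \<rho> T' \<noteq> \<rho> T) \<and>
        (\<forall>a\<in>Field W. (\<forall>T'. LT_prec X H T' T \<longrightarrow> (\<rho> T', a) \<in> W \<and> \<rho> T' \<noteq> a)
              \<longrightarrow> (\<rho> T, a) \<in> W))"

end

(* Order type omega_1 means that every proper initial segment of the well-order is countable,
   while the whole carrier is not.  A countable initial segment therefore embeds, order-preservingly
   and injectively, into any final segment, and even into a bounded interval of it.

   Thresholds admit no infinite Littlestone tree: along the all-False branch the nodes would form
   an infinite descending chain.  For the rank, say that T' dominates T if the version space of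
   every branch of T' contains an order-embedded copy of the version space of some branch of T.
   Any one-level extension of T can then be mirrored by one of T' (cut the copy at the image of
   the least point above the new node), so rank T <= rank T'.  If only countably many ordinals
   lay below the rank of the empty tree, uncountably many roots x would give depth-1 trees of
   equal rank; for two such roots x < x' far enough apart there is a depth-2 tree T2 extending
   the one at x' that dominates the one at x, so rank(x) <= rank T2 < rank(x'), a contradiction. *)

theory Submission
  imports Defs "HOL-Library.Countable_Set_Type"
begin

unbundle cardinal_syntax

lemma cardSuc_natLeq_ordLeq_Restr:
  assumes "Well_order W" and "S \<subseteq> Field W" and "uncountable S"
  shows "cardSuc natLeq \<le>o Restr W S"
proof -
  have "Field (Restr W S) = S"
    using assms(1,2) by (auto simp: Field_def order_on_defs refl_on_def)
  then have "well_order_on S (Restr W S)"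
    using Well_order_Restr[OF assms(1)] by metis
  then have "|S| \<le>o Restr W S" by (rule card_of_least)
  moreover have "natLeq <o |S|"
    using assms(3) countable_card_le_natLeq not_ordLeq_iff_ordLess card_of_Well_order natLeq_Well_order
    by blast
  then have "cardSuc natLeq \<le>o |S|"
    using cardSuc_ordLess_ordLeq natLeq_Card_order card_of_Card_order by blast
  ultimately show ?thesis using ordLeq_transitive by blast
qed

lemma LTree_depth_unique: "LTree X H d T \<Longrightarrow> LTree X H d' T \<Longrightarrow> d = d'"
proof -
  assume "LTree X H d T" "LTree X H d' T"
  then have "{u :: bool list. length u < d} = {u. length u < d'}" unfolding LTree_def by auto
  then have "k < d \<longleftrightarrow> k < d'" for k
    by (metis (mono_tags) length_replicate mem_Collect_eq)
  then show "d = d'" by (metis less_irrefl nat_neq_iff)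
qed

lemma is_rank_function_less:
  "is_rank_function X H W \<rho> \<Longrightarrow> LT_prec X H T' T \<Longrightarrow>
    (\<rho> T', \<rho> T) \<in> W \<and> \<rho> T' \<noteq> \<rho> T"
proof -
  assume RF: "is_rank_function X H W \<rho>" and prec: "LT_prec X H T' T"
  then have "finite_LTree X H T" unfolding LT_prec_def finite_LTree_def by blast
  then show ?thesis using RF prec unfolding is_rank_function_def by blast
qed

lemma uncountable_fiber:
  assumes "countable V" and "f ` D \<subseteq> V" and "uncountable D"
  shows "\<exists>v. uncountable {x \<in> D. f x = v}"
proof (rule ccontr)
  assume "\<nexists>v. uncountable {x \<in> D. f x = v}"
  then have "countable (\<Union>v\<in>V. {x \<in> D. f x = v})"
    by (intro countable_UN[OF assms(1)]) blast
  moreover have "D \<subseteq> (\<Union>v\<in>V. {x \<in> D. f x = v})" using assms(2) by blast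
  ultimately have "countable D" by (rule countable_subset[rotated])
  with assms(3) show False by contradiction
qed

definition extend_level ::
  "(bool list \<Rightarrow> 'x option) \<Rightarrow> nat \<Rightarrow> (bool list \<Rightarrow> 'x) \<Rightarrow> bool list \<Rightarrow> 'x option" where
  "extend_level T d f u = (if length u = d then Some (f u) else T u)"

lemma dom_extend_level:
  "dom T = {u. length u < d} \<Longrightarrow> dom (extend_level T d f) = {u. length u < Suc d}"
  unfolding extend_level_def by (auto simp: dom_def set_eq_iff)

lemma restrict_extend_level:
  "dom T = {u. length u < d} \<Longrightarrow> extend_level T d f |` {u. length u < d} = T"
  by (rule ext) (auto simp: extend_level_def restrict_map_def dom_def)

lemma ran_extend_level: "ran (extend_level T d f) \<subseteq> ran T \<union> f ` {u. length u = d}"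
  by (auto simp: extend_level_def ran_def split: if_splits)

locale omega1_order =
  fixes A :: "'a set" and L :: "'a rel"
  assumes well_order: "well_order_on A L"
    and order_type: "L =o cardSuc natLeq"
begin

lemma Field_L: "Field L = A"
  using well_order_on_Field[OF well_order] by simp

lemma Well_order_L: "Well_order L"
  using well_order Field_L by simp

lemma L_refl: "z \<in> A \<Longrightarrow> (z, z) \<in> L"
  using well_order by (auto simp: order_on_defs refl_on_def)

lemma L_mem: "(a, b) \<in> L \<Longrightarrow> a \<in> A \<and> b \<in> A"
  using Field_L unfolding Field_def by blast

lemma L_antisym: "(a, b) \<in> L \<Longrightarrow> (b, a) \<in> L \<Longrightarrow> a = b"
  using well_order by (auto simp: order_on_defs antisym_def)

lemma L_trans: "(a, b) \<in> L \<Longrightarrow> (b, c) \<in> L \<Longrightarrow> (a, c) \<in> L"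
  using well_order by (auto simp: order_on_defs trans_def)

lemma L_total: "a \<in> A \<Longrightarrow> b \<in> A \<Longrightarrow> (a, b) \<in> L \<or> (b, a) \<in> L"
  using well_order L_refl by (cases "a = b") (auto simp: order_on_defs total_on_def)

lemma wf_L_strict: "wf (L - Id)"
  using well_order by (simp add: well_order_on_def)

lemma underS_not_above: "z \<in> underS L b \<Longrightarrow> (b, z) \<notin> L"
  using L_antisym by (auto simp: underS_def)

lemma not_above_underS: "z \<in> A \<Longrightarrow> b \<in> A \<Longrightarrow> (b, z) \<notin> L \<Longrightarrow> z \<in> underS L b"
  using L_total L_refl by (auto simp: underS_def)

lemma underS_trans: "z \<in> underS L b \<Longrightarrow> (b, c) \<in> L \<Longrightarrow> z \<in> underS L c"
  using L_trans L_antisym by (auto simp: underS_def)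

lemma le_underS_trans: "(a, z) \<in> L \<Longrightarrow> z \<in> underS L b \<Longrightarrow> a \<in> underS L b"
  using L_trans L_antisym by (auto simp: underS_def)

lemma underS_subset: "underS L x \<subseteq> A"
  using L_mem by (auto simp: underS_def)

lemma above_subset: "above L a \<subseteq> A"
  using L_mem by (auto simp: above_def)

lemma Field_Restr_L: "S \<subseteq> A \<Longrightarrow> Field (Restr L S) = S"
  using L_refl by (auto simp: Field_def)

lemma uncountable_carrier: "uncountable A"
proof
  assume "countable A"
  then have "|A| \<le>o natLeq" by (simp add: countable_card_le_natLeq)
  moreover have "cardSuc natLeq \<le>o L"
    using order_type ordIso_iff_ordLeq by blast
  then have "|Field (cardSuc natLeq)| \<le>o |A|"
    using card_of_mono2 Field_L by fastforce
  then have "cardSuc natLeq \<le>o |A|"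
    using card_of_Field_ordIso[OF cardSuc_Card_order[OF natLeq_Card_order]]
      ordIso_ordLeq_trans ordIso_symmetric by blast
  ultimately show False
    using cardSuc_greater[OF natLeq_Card_order] not_ordLess_ordLeq ordLeq_transitive by blast
qed

lemma countable_underS: "countable (underS L w)"
proof -
  let ?U = "underS L w"
  have "well_order_on ?U (Restr L ?U)"
    using Well_order_Restr[OF Well_order_L] Field_Restr_L[OF underS_subset] by metis
  then have "|?U| \<le>o Restr L ?U" by (rule card_of_least)
  also have "Restr L ?U <o L"
    using underS_Restr_ordLess[OF Well_order_L] Field_L uncountable_carrier by fastforce
  also note order_type
  finally have "|?U| \<le>o natLeq"
    using cardSuc_ordLeq_ordLess[OF natLeq_Card_order card_of_Card_order] by blast
  then show ?thesis by (simp add: countable_card_le_natLeq)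
qed

lemma countable_under: "countable (under L w)"
proof -
  have "under L w \<subseteq> insert w (underS L w)"
    by (auto simp: under_def underS_def)
  moreover have "countable (insert w (underS L w))"
    using countable_underS by simp
  ultimately show ?thesis by (rule countable_subset)
qed

lemma uncountable_above:
  assumes "a \<in> A"
  shows "uncountable (above L a)"
proof
  assume "countable (above L a)"
  moreover have "A \<subseteq> under L a \<union> above L a"
    using L_total assms by (auto simp: under_def above_def)
  moreover have "countable (under L a \<union> above L a)"
    using countable_under \<open>countable (above L a)\<close> by simp
  ultimately show False
    using uncountable_carrier countable_subset by metis
qed

lemma countable_has_strict_upper_bound:
  assumes "countable C" and "C \<subseteq> A"
  shows "\<exists>b\<in>A. C \<subseteq> underS L b"
proof (rule ccontr)
  assume "\<not> ?thesis"
  then have "A \<subseteq> (\<Union>c\<in>C. under L c)"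
    using not_above_underS assms(2) by (fastforce simp: under_def)
  moreover have "countable (\<Union>c\<in>C. under L c)"
    by (intro countable_UN assms(1) countable_under)
  ultimately show False using uncountable_carrier countable_subset by metis
qed

lemma exists_least:
  assumes "S \<subseteq> A" and "S \<noteq> {}"
  shows "\<exists>m\<in>S. \<forall>s\<in>S. (m, s) \<in> L"
proof -
  obtain m where m: "m \<in> S" "\<And>s. (s, m) \<in> L - Id \<Longrightarrow> s \<notin> S"
    using wfE_min[OF wf_L_strict] assms(2) by blast
  then have "(m, s) \<in> L" if "s \<in> S" for s
    using L_total[of m s] that assms(1) L_refl by blast
  then show ?thesis using m(1) by blast
qed

definition order_embeds :: "'a set \<Rightarrow> 'a set \<Rightarrow> bool" where
  "order_embeds V V' \<longleftrightarrow>
     (\<exists>e. e ` V \<subseteq> V' \<and> inj_on e V \<and> (\<forall>z\<in>V. \<forall>w\<in>V. (z, w) \<in> L \<longrightarrow> (e z, e w) \<in> L))"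

lemma order_embeds_subset: "V \<subseteq> V' \<Longrightarrow> order_embeds V V'"
  unfolding order_embeds_def by (intro exI[of _ id]) auto

lemma order_embeds_mono:
  "order_embeds U U' \<Longrightarrow> V \<subseteq> U \<Longrightarrow> U' \<subseteq> V' \<Longrightarrow> order_embeds V V'"
  unfolding order_embeds_def by (meson image_mono inj_on_subset order_trans subsetD)

lemma order_embeds_nonempty: "order_embeds V V' \<Longrightarrow> V \<noteq> {} \<Longrightarrow> V' \<noteq> {}"
  unfolding order_embeds_def by blast

lemma underS_embeds_above:
  assumes "a \<in> A"
  shows "order_embeds (underS L x) (above L a)"
proof -
  let ?U = "underS L x" and ?T = "above L a"
  have W: "Well_order (Restr L ?U)" "Well_order (Restr L ?T)"
    using Well_order_Restr[OF Well_order_L] by simp_all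
  have F: "Field (Restr L ?U) = ?U" "Field (Restr L ?T) = ?T"
    using Field_Restr_L[OF underS_subset] Field_Restr_L[OF above_subset] by simp_all
  have "\<not> Restr L ?T \<le>o Restr L ?U"
  proof
    assume "Restr L ?T \<le>o Restr L ?U"
    then obtain f where f: "embed (Restr L ?T) (Restr L ?U) f" unfolding ordLeq_def by blast
    have "f ` ?T \<subseteq> ?U" using embed_Field[OF f] F by simp
    then have "countable (f ` ?T)" using countable_underS by (rule countable_subset)
    moreover have "inj_on f ?T" using embed_inj_on[OF W(2) f] F by simp
    ultimately have "countable ?T" by (rule countable_image_inj_on)
    then show False using uncountable_above[OF assms] by blast
  qed
  then have "Restr L ?U \<le>o Restr L ?T" using ordLeq_total[OF W] by blast
  then obtain f where f: "embed (Restr L ?U) (Restr L ?T) f" unfolding ordLeq_def by blast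
  have "f ` ?U \<subseteq> ?T" and "inj_on f ?U"
    using embed_Field[OF f] embed_inj_on[OF W(1) f] F by simp_all
  moreover have "\<forall>z\<in>?U. \<forall>w\<in>?U. (z, w) \<in> L \<longrightarrow> (f z, f w) \<in> L"
    using embed_compat[OF f] unfolding compat_def by blast
  ultimately show ?thesis unfolding order_embeds_def by (intro exI[of _ f]) simp
qed

lemma underS_embeds_interval:
  assumes "a \<in> A"
  shows "\<exists>b\<in>A. order_embeds (underS L x) (above L a \<inter> underS L b)"
proof -
  obtain e where e: "e ` underS L x \<subseteq> above L a" "inj_on e (underS L x)"
    "\<forall>z\<in>underS L x. \<forall>w\<in>underS L x. (z, w) \<in> L \<longrightarrow> (e z, e w) \<in> L"
    using underS_embeds_above[OF assms] unfolding order_embeds_def by blast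
  have "countable (e ` underS L x)" using countable_underS by simp
  moreover have "e ` underS L x \<subseteq> A" using e(1) above_subset by blast
  ultimately obtain b where "b \<in> A" "e ` underS L x \<subseteq> underS L b"
    using countable_has_strict_upper_bound by meson
  with e show ?thesis unfolding order_embeds_def by (intro bexI[of _ b] exI[of _ e]) auto
qed

definition thresholds :: "('a \<Rightarrow> bool) set" where
  "thresholds = {(\<lambda>x. (x, z) \<in> L) | z. z \<in> A}"

lemma not_has_infinite_LTree: "\<not> has_infinite_LTree A thresholds"
proof
  assume "has_infinite_LTree A thresholds"
  then obtain T where T_A: "range T \<subseteq> A"
    and T: "\<And>y :: bool list. \<exists>h\<in>thresholds. \<forall>k<length y. h (T (take k y)) = y ! k"
    unfolding has_infinite_LTree_def infinite_LTree_def by blast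
  define f where "f n = T (replicate n False)" for n
  have "(f (Suc n), f n) \<in> L - Id" for n
  proof -
    let ?y = "replicate n False @ [False, True]"
    obtain z where "z \<in> A" and z: "\<forall>k<length ?y. ((T (take k ?y), z) \<in> L) = ?y ! k"
      using T[of ?y] unfolding thresholds_def by auto
    have "(f n, z) \<notin> L"
      using z[rule_format, of n] by (simp add: f_def nth_append)
    moreover have "f n \<in> A" using T_A by (auto simp: f_def)
    ultimately have "(z, f n) \<in> L" using L_total[OF \<open>z \<in> A\<close>] by blast
    moreover have "(f (Suc n), z) \<in> L"
      using z[rule_format, of "Suc n"]
      by (simp add: f_def nth_append replicate_append_same[symmetric])
    ultimately show ?thesis using L_trans \<open>(f n, z) \<notin> L\<close> by auto
  qed
  then show False
    using wf_L_strict unfolding wf_iff_no_infinite_down_chain by blast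
qed

definition version_space :: "(bool list \<Rightarrow> 'a option) \<Rightarrow> nat \<Rightarrow> bool list \<Rightarrow> 'a set" where
  "version_space T d y = {z \<in> A. \<forall>k<d. ((the (T (take k y)), z) \<in> L) = y ! k}"

lemma LTree_thresholds_iff:
  "LTree A thresholds d T \<longleftrightarrow> dom T = {u. length u < d} \<and> ran T \<subseteq> A \<and>
     (\<forall>y. length y = d \<longrightarrow> version_space T d y \<noteq> {})"
proof -
  have "(\<exists>h\<in>thresholds. \<forall>k<d. h (the (T (take k y))) = y ! k) \<longleftrightarrow> version_space T d y \<noteq> {}"
    for y
    unfolding thresholds_def version_space_def by auto
  then show ?thesis unfolding LTree_def by simp
qed

lemma version_space_subset: "version_space T d y \<subseteq> A"
  unfolding version_space_def by blast

lemma version_space_snoc: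
  assumes "T = T' |` {u. length u < d}" and "length y = d"
  shows "version_space T' (Suc d) (y @ [b]) =
    {z \<in> version_space T d y. ((the (T' y), z) \<in> L) = b}"
proof -
  have "T (take k y) = T' (take k (y @ [b]))" and "(y @ [b]) ! k = y ! k" if "k < d" for k
    using that assms by (simp_all add: nth_append)
  then show ?thesis
    using assms(2) unfolding version_space_def by (auto simp: less_Suc_eq)
qed

lemma version_space_extend_level:
  assumes "dom T = {u. length u < d}" and "length y = d"
  shows "version_space (extend_level T d f) (Suc d) (y @ [b]) =
    {z \<in> version_space T d y. ((f y, z) \<in> L) = b}"
  using version_space_snoc[OF restrict_extend_level[OF assms(1), symmetric] assms(2)] assms(2)
  by (simp add: extend_level_def)

lemma LTree_extend_level:
  assumes T: "LTree A thresholds d T"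
    and f: "\<And>y. length y = d \<Longrightarrow> f y \<in> A"
    and ne: "\<And>y b. length y = d \<Longrightarrow> {z \<in> version_space T d y. ((f y, z) \<in> L) = b} \<noteq> {}"
  shows "LTree A thresholds (Suc d) (extend_level T d f)"
    and "LT_prec A thresholds (extend_level T d f) T"
proof -
  have dom: "dom T = {u. length u < d}" and "ran T \<subseteq> A"
    using T by (simp_all add: LTree_thresholds_iff)
  moreover have "f ` {u. length u = d} \<subseteq> A" using f by blast
  ultimately have "ran (extend_level T d f) \<subseteq> A"
    using ran_extend_level[of T d f] by blast
  moreover have "version_space (extend_level T d f) (Suc d) y \<noteq> {}" if "length y = Suc d" for y
  proof -
    obtain y' b where "y = y' @ [b]" and "length y' = d"
      using \<open>length y = Suc d\<close> by (auto simp: length_Suc_conv_rev)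
    then show ?thesis using ne version_space_extend_level[OF dom] by simp
  qed
  ultimately show ext: "LTree A thresholds (Suc d) (extend_level T d f)"
    using dom_extend_level[OF dom] by (simp add: LTree_thresholds_iff)
  show "LT_prec A thresholds (extend_level T d f) T"
    unfolding LT_prec_def
    by (intro exI[of _ d]) (simp add: T ext restrict_extend_level[OF dom])
qed

definition dominated_by ::
  "(bool list \<Rightarrow> 'a option) \<Rightarrow> nat \<Rightarrow> (bool list \<Rightarrow> 'a option) \<Rightarrow> nat \<Rightarrow> bool" where
  "dominated_by T d T' d' \<longleftrightarrow> (\<forall>y'. length y' = d' \<longrightarrow>
     (\<exists>y. length y = d \<and> order_embeds (version_space T d y) (version_space T' d' y')))"

lemma order_embeds_split:
  assumes emb: "order_embeds V V'" and "V \<subseteq> A" and "p \<in> A" and ne: "V \<inter> above L p \<noteq> {}"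
  shows "\<exists>q\<in>V'. \<forall>b. order_embeds {z \<in> V. ((p, z) \<in> L) = b} {z \<in> V'. ((q, z) \<in> L) = b}"
proof -
  obtain e where e: "e ` V \<subseteq> V'" "inj_on e V"
    and mono: "\<And>z w. z \<in> V \<Longrightarrow> w \<in> V \<Longrightarrow> (z, w) \<in> L \<Longrightarrow> (e z, e w) \<in> L"
    using emb unfolding order_embeds_def by blast
  \<comment> \<open>Cut V' at the image of the least point of V above p.\<close>
  obtain m where m: "m \<in> V" "(p, m) \<in> L"
    and least: "\<And>z. z \<in> V \<Longrightarrow> (p, z) \<in> L \<Longrightarrow> (m, z) \<in> L"
    using exists_least[of "V \<inter> above L p"] ne \<open>V \<subseteq> A\<close> by (auto simp: above_def)
  have "(p, z) \<in> L \<longleftrightarrow> (e m, e z) \<in> L" if z: "z \<in> V" for z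
  proof
    assume "(p, z) \<in> L"
    then show "(e m, e z) \<in> L" using mono least m(1) z by blast
  next
    assume em: "(e m, e z) \<in> L"
    show "(p, z) \<in> L"
    proof (rule ccontr)
      assume "(p, z) \<notin> L"
      then have "z \<in> underS L p" using not_above_underS \<open>V \<subseteq> A\<close> z \<open>p \<in> A\<close> by blast
      then have "z \<in> underS L m" using underS_trans m(2) by blast
      then have "(e z, e m) \<in> L" and "z \<noteq> m" using mono z m(1) by (auto simp: underS_def)
      then show False using em L_antisym e(2) z m(1) by (metis inj_onD)
    qed
  qed
  then have "order_embeds {z \<in> V. ((p, z) \<in> L) = b} {z \<in> V'. ((e m, z) \<in> L) = b}" for b
    unfolding order_embeds_def using e mono
    by (intro exI[of _ e]) (auto intro: inj_on_subset)
  then show ?thesis using e(1) m(1) by blast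
qed

lemma version_space_split_embeds:
  assumes T': "LTree A thresholds (Suc d) T'" and TT': "T = T' |` {u. length u < d}"
    and y: "length y = d" and emb: "order_embeds (version_space T d y) V'"
  shows "\<exists>q\<in>V'. \<forall>b. order_embeds (version_space T' (Suc d) (y @ [b])) {z \<in> V'. ((q, z) \<in> L) = b}"
proof -
  let ?p = "the (T' y)"
  have "y \<in> dom T'" and "ran T' \<subseteq> A" using T' y by (simp_all add: LTree_thresholds_iff)
  then have "?p \<in> A" by (auto simp: ran_def)
  have VS: "version_space T' (Suc d) (y @ [b]) = {z \<in> version_space T d y. ((?p, z) \<in> L) = b}"
    for b
    using version_space_snoc[OF TT' y] .
  have "version_space T' (Suc d) (y @ [True]) \<noteq> {}"
    using T' y by (simp add: LTree_thresholds_iff)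
  then have "version_space T d y \<inter> above L ?p \<noteq> {}"
    using VS[of True] by (auto simp: above_def)
  then show ?thesis
    using order_embeds_split[OF emb version_space_subset \<open>?p \<in> A\<close>] by (simp add: VS)
qed

lemma dominated_by_extend:
  assumes T': "LTree A thresholds (Suc d) T'" and TT': "T = T' |` {u. length u < d}"
    and T2: "LTree A thresholds d2 T2" and dom: "dominated_by T d T2 d2"
  shows "\<exists>T2'. LTree A thresholds (Suc d2) T2' \<and> LT_prec A thresholds T2' T2 \<and>
    dominated_by T' (Suc d) T2' (Suc d2)"
proof -
  have "\<forall>y2\<in>{y2. length y2 = d2}. \<exists>q. q \<in> version_space T2 d2 y2 \<and> (\<exists>y. length y = d \<and>
      (\<forall>b. order_embeds (version_space T' (Suc d) (y @ [b]))
        {z \<in> version_space T2 d2 y2. ((q, z) \<in> L) = b}))"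
    using dom version_space_split_embeds[OF T' TT'] unfolding dominated_by_def by blast
  from bchoice[OF this] obtain Q where "\<forall>y2\<in>{y2. length y2 = d2}.
      Q y2 \<in> version_space T2 d2 y2 \<and> (\<exists>y. length y = d \<and>
      (\<forall>b. order_embeds (version_space T' (Suc d) (y @ [b]))
        {z \<in> version_space T2 d2 y2. ((Q y2, z) \<in> L) = b}))"
    by blast
  then have Q_A: "\<And>y2. length y2 = d2 \<Longrightarrow> Q y2 \<in> A"
    and Q: "\<And>y2. length y2 = d2 \<Longrightarrow> \<exists>y. length y = d \<and> (\<forall>b. order_embeds
      (version_space T' (Suc d) (y @ [b])) {z \<in> version_space T2 d2 y2. ((Q y2, z) \<in> L) = b})"
    using version_space_subset by blast+
  have dom2: "dom T2 = {u. length u < d2}" using T2 by (simp add: LTree_thresholds_iff)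
  have ne: "{z \<in> version_space T2 d2 y2. ((Q y2, z) \<in> L) = b} \<noteq> {}" if y2: "length y2 = d2" for y2 b
  proof -
    obtain y where "length y = d" and "order_embeds (version_space T' (Suc d) (y @ [b]))
        {z \<in> version_space T2 d2 y2. ((Q y2, z) \<in> L) = b}"
      using Q[OF y2] by blast
    moreover have "version_space T' (Suc d) (y @ [b]) \<noteq> {}"
      using T' \<open>length y = d\<close> by (simp add: LTree_thresholds_iff)
    ultimately show ?thesis using order_embeds_nonempty by blast
  qed
  have "dominated_by T' (Suc d) (extend_level T2 d2 Q) (Suc d2)"
    unfolding dominated_by_def
  proof (intro allI impI)
    fix y' :: "bool list"
    assume "length y' = Suc d2"
    then obtain y2 b where y': "y' = y2 @ [b]" and y2: "length y2 = d2"
      by (auto simp: length_Suc_conv_rev)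
    then obtain y where "length y = d" and "order_embeds (version_space T' (Suc d) (y @ [b]))
        (version_space (extend_level T2 d2 Q) (Suc d2) y')"
      using Q[OF y2] version_space_extend_level[OF dom2 y2] by auto
    then show "\<exists>y. length y = Suc d \<and> order_embeds (version_space T' (Suc d) y)
        (version_space (extend_level T2 d2 Q) (Suc d2) y')"
      by (intro exI[of _ "y @ [b]"]) simp
  qed
  then show ?thesis using LTree_extend_level[OF T2 Q_A ne] by blast
qed

lemma dominated_by_prec:
  assumes T: "LTree A thresholds d T" and T2: "LTree A thresholds d2 T2"
    and dom: "dominated_by T d T2 d2" and prec: "LT_prec A thresholds T' T"
  shows "\<exists>T2'. LTree A thresholds (Suc d) T' \<and> LTree A thresholds (Suc d2) T2' \<and>
    LT_prec A thresholds T2' T2 \<and> dominated_by T' (Suc d) T2' (Suc d2)"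
proof -
  obtain d' where "LTree A thresholds d' T" "LTree A thresholds (Suc d') T'"
    and "T = T' |` {u. length u < d'}"
    using prec unfolding LT_prec_def by blast
  then have "LTree A thresholds (Suc d) T'" and "T = T' |` {u. length u < d}"
    using LTree_depth_unique T by blast+
  then show ?thesis using dominated_by_extend T2 dom by blast
qed

lemma rank_mono:
  assumes RF: "is_rank_function A thresholds W \<rho>"
    and "LTree A thresholds d T" and "LTree A thresholds d2 T2" and "dominated_by T d T2 d2"
  shows "(\<rho> T, \<rho> T2) \<in> W"
proof -
  have "Well_order W" using RF unfolding is_rank_function_def by blast
  then have wf: "wf (W - Id)" and "trans W" and "antisym W" by (simp_all add: order_on_defs)
  have rank_field: "\<And>T. finite_LTree A thresholds T \<Longrightarrow> \<rho> T \<in> Field W"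
    and rank_least: "\<And>T a. finite_LTree A thresholds T \<Longrightarrow> a \<in> Field W \<Longrightarrow>
      (\<forall>T'. LT_prec A thresholds T' T \<longrightarrow> (\<rho> T', a) \<in> W \<and> \<rho> T' \<noteq> a) \<Longrightarrow>
      (\<rho> T, a) \<in> W"
    using RF unfolding is_rank_function_def by blast+
  have "\<forall>d T d2 T2. LTree A thresholds d T \<longrightarrow> LTree A thresholds d2 T2 \<longrightarrow>
      dominated_by T d T2 d2 \<longrightarrow> \<rho> T2 = a \<longrightarrow> (\<rho> T, a) \<in> W" for a
  proof (induction a rule: wf_induct[OF wf])
    case (1 a)
    show ?case
    proof (intro allI impI)
      fix d T d2 T2
      assume T: "LTree A thresholds d T" and T2: "LTree A thresholds d2 T2"
        and dom: "dominated_by T d T2 d2" and a: "\<rho> T2 = a"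
      have "(\<rho> T', a) \<in> W \<and> \<rho> T' \<noteq> a" if prec: "LT_prec A thresholds T' T" for T'
      proof -
        obtain T2' where T': "LTree A thresholds (Suc d) T'"
          and T2': "LTree A thresholds (Suc d2) T2'" "LT_prec A thresholds T2' T2"
          and dom': "dominated_by T' (Suc d) T2' (Suc d2)"
          using dominated_by_prec[OF T T2 dom prec] by blast
        have less: "(\<rho> T2', a) \<in> W" "\<rho> T2' \<noteq> a"
          using is_rank_function_less[OF RF T2'(2)] a by auto
        then have "(\<rho> T', \<rho> T2') \<in> W"
          using 1[rule_format, of "\<rho> T2'" "Suc d" T' "Suc d2" T2'] T' T2'(1) dom' by blast
        then show ?thesis
          using less \<open>trans W\<close> \<open>antisym W\<close> by (metis antisymD transD)
      qed
      moreover have "finite_LTree A thresholds T" "finite_LTree A thresholds T2"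
        using T T2 unfolding finite_LTree_def by blast+
      ultimately show "(\<rho> T, a) \<in> W"
        using rank_least rank_field a by blast
    qed
  qed
  then show ?thesis using assms(2-4) by simp
qed

abbreviation root_tree :: "'a \<Rightarrow> bool list \<Rightarrow> 'a option" where
  "root_tree x \<equiv> extend_level Map.empty 0 (\<lambda>_. x)"

lemma LTree_empty: "LTree A thresholds 0 Map.empty"
  using uncountable_carrier by (auto simp: LTree_thresholds_iff version_space_def)

lemma version_space_root: "version_space (root_tree x) 1 [b] = {z \<in> A. ((x, z) \<in> L) = b}"
  using version_space_extend_level[of Map.empty 0 "[]" "\<lambda>_. x" b]
  by (simp add: version_space_def)

lemma version_space_root_False: "x \<in> A \<Longrightarrow> version_space (root_tree x) 1 [False] = underS L x"
  unfolding version_space_root using not_above_underS underS_not_above underS_subset by blast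

lemma LTree_root:
  assumes "x \<in> A" and "underS L x \<noteq> {}"
  shows "LTree A thresholds 1 (root_tree x)" and "LT_prec A thresholds (root_tree x) Map.empty"
proof -
  obtain w where "w \<in> underS L x" using assms(2) by blast
  then have "w \<in> A" "(x, w) \<notin> L" using underS_not_above underS_subset by blast+
  then have "{z \<in> version_space Map.empty 0 y. ((x, z) \<in> L) = b} \<noteq> {}" for y b
    using assms(1) L_refl by (cases b) (auto simp: version_space_def)
  then show "LTree A thresholds 1 (root_tree x)" and "LT_prec A thresholds (root_tree x) Map.empty"
    using LTree_extend_level[OF LTree_empty, of "\<lambda>_. x"] assms(1) by simp_all
qed

lemma interval_embeds_less:
  "order_embeds V (above L a \<inter> underS L b) \<Longrightarrow> V \<noteq> {} \<Longrightarrow> a \<in> underS L b"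
  using order_embeds_nonempty le_underS_trans unfolding above_def by blast

lemma underS_embeds_two_level_cells:
  assumes x: "x \<in> A" "underS L x \<noteq> {}" and "x' \<in> A"
    and emb: "order_embeds (underS L x) (above L x \<inter> underS L x')"
  shows "\<exists>s\<in>A. \<forall>c1 c2. order_embeds (underS L x)
    {z \<in> A. ((x', z) \<in> L) = c1 \<and> ((if c1 then s else x, z) \<in> L) = c2}"
proof -
  obtain s where "s \<in> A" and emb_s: "order_embeds (underS L x) (above L x' \<inter> underS L s)"
    using underS_embeds_interval[OF \<open>x' \<in> A\<close>] by blast
  have emb_above: "order_embeds (underS L x) (above L s)"
    using underS_embeds_above[OF \<open>s \<in> A\<close>] .
  have "(x, x') \<in> L" and "(x', s) \<in> L"
    using interval_embeds_less[OF emb x(2)] interval_embeds_less[OF emb_s x(2)]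
    by (simp_all add: underS_def)
  have "order_embeds (underS L x)
      {z \<in> A. ((x', z) \<in> L) = c1 \<and> ((if c1 then s else x, z) \<in> L) = c2}" for c1 c2
  proof (cases c1; cases c2)
    assume "c1" "c2"
    have "above L s \<subseteq> {z \<in> A. (x', z) \<in> L \<and> (s, z) \<in> L}"
      using above_subset L_trans[OF \<open>(x', s) \<in> L\<close>] by (auto simp: above_def)
    then have "order_embeds (underS L x) {z \<in> A. (x', z) \<in> L \<and> (s, z) \<in> L}"
      by (rule order_embeds_mono[OF emb_above order.refl])
    then show ?thesis using \<open>c1\<close> \<open>c2\<close> by simp
  next
    assume "c1" "\<not> c2"
    have "above L x' \<inter> underS L s \<subseteq> {z \<in> A. (x', z) \<in> L \<and> (s, z) \<notin> L}"
      using above_subset underS_not_above by (auto simp: above_def)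
    then have "order_embeds (underS L x) {z \<in> A. (x', z) \<in> L \<and> (s, z) \<notin> L}"
      by (rule order_embeds_mono[OF emb_s order.refl])
    then show ?thesis using \<open>c1\<close> \<open>\<not> c2\<close> by simp
  next
    assume "\<not> c1" "c2"
    have "above L x \<inter> underS L x' \<subseteq> {z \<in> A. (x', z) \<notin> L \<and> (x, z) \<in> L}"
      using above_subset underS_not_above by (auto simp: above_def)
    then have "order_embeds (underS L x) {z \<in> A. (x', z) \<notin> L \<and> (x, z) \<in> L}"
      by (rule order_embeds_mono[OF emb order.refl])
    then show ?thesis using \<open>\<not> c1\<close> \<open>c2\<close> by simp
  next
    assume "\<not> c1" "\<not> c2"
    have "underS L x \<subseteq> {z \<in> A. (x', z) \<notin> L \<and> (x, z) \<notin> L}"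
      using underS_subset underS_not_above underS_trans[OF _ \<open>(x, x') \<in> L\<close>] by blast
    then have "order_embeds (underS L x) {z \<in> A. (x', z) \<notin> L \<and> (x, z) \<notin> L}"
      by (rule order_embeds_subset)
    then show ?thesis using \<open>\<not> c1\<close> \<open>\<not> c2\<close> by simp
  qed
  then show ?thesis using \<open>s \<in> A\<close> by blast
qed

lemma root_dominated_by_two_level_tree:
  assumes x: "x \<in> A" "underS L x \<noteq> {}" and "x' \<in> A"
    and emb: "order_embeds (underS L x) (above L x \<inter> underS L x')"
  shows "\<exists>T2. LTree A thresholds 2 T2 \<and> LT_prec A thresholds T2 (root_tree x') \<and>
    dominated_by (root_tree x) 1 T2 2"
proof -
  obtain s where "s \<in> A" and cells: "\<And>c1 c2. order_embeds (underS L x)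
      {z \<in> A. ((x', z) \<in> L) = c1 \<and> ((if c1 then s else x, z) \<in> L) = c2}"
    using underS_embeds_two_level_cells[OF x \<open>x' \<in> A\<close> emb] by blast
  define f where "f u = (if u = [True] then s else x)" for u
  have leaf_embeds:
    "order_embeds (underS L x) {z \<in> version_space (root_tree x') 1 [c1]. ((f [c1], z) \<in> L) = c2}"
    for c1 c2
    using cells[of c1 c2] unfolding version_space_root by (simp add: f_def)
  have root': "LTree A thresholds 1 (root_tree x')"
    using LTree_root \<open>x' \<in> A\<close> interval_embeds_less[OF emb x(2)] by blast
  have dom': "dom (root_tree x') = {u. length u < 1}"
    using root' by (simp add: LTree_thresholds_iff)
  have f_A: "f y \<in> A" for y using \<open>s \<in> A\<close> x(1) by (simp add: f_def)
  have ne: "{z \<in> version_space (root_tree x') 1 y. ((f y, z) \<in> L) = b} \<noteq> {}"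
    if "length y = 1" for y b
  proof -
    obtain c where "y = [c]" using \<open>length y = 1\<close> by (auto simp: length_Suc_conv)
    then show ?thesis using order_embeds_nonempty[OF leaf_embeds x(2)] by simp
  qed
  have "dominated_by (root_tree x) 1 (extend_level (root_tree x') 1 f) 2"
    unfolding dominated_by_def
  proof (intro allI impI exI[of _ "[False]"] conjI)
    fix y' :: "bool list"
    assume "length y' = 2"
    then obtain c1 c2 where "y' = [c1] @ [c2]"
      by (auto simp: numeral_2_eq_2 length_Suc_conv)
    then show "order_embeds (version_space (root_tree x) 1 [False])
        (version_space (extend_level (root_tree x') 1 f) 2 y')"
      using leaf_embeds version_space_extend_level[OF dom', of "[c1]" f c2]
        version_space_root_False[OF x(1)] by (simp add: numeral_2_eq_2)
  qed simp
  moreover note LTree_extend_level[OF root' f_A ne]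
  ultimately show ?thesis by (auto simp: numeral_2_eq_2)
qed

lemma rank_root_tree_less:
  assumes RF: "is_rank_function A thresholds W \<rho>"
    and "x \<in> A" "underS L x \<noteq> {}" "x' \<in> A"
    and "order_embeds (underS L x) (above L x \<inter> underS L x')"
  shows "\<rho> (root_tree x) \<noteq> \<rho> (root_tree x')"
proof
  assume eq: "\<rho> (root_tree x) = \<rho> (root_tree x')"
  obtain T2 where T2: "LTree A thresholds 2 T2" "LT_prec A thresholds T2 (root_tree x')"
    and dom: "dominated_by (root_tree x) 1 T2 2"
    using root_dominated_by_two_level_tree assms(2-5) by blast
  have "LTree A thresholds 1 (root_tree x)"
    using LTree_root assms(2,3) by blast
  then have "(\<rho> (root_tree x), \<rho> T2) \<in> W"
    using rank_mono[OF RF _ T2(1) dom] by blast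
  moreover have "(\<rho> T2, \<rho> (root_tree x')) \<in> W" and "\<rho> T2 \<noteq> \<rho> (root_tree x')"
    using is_rank_function_less[OF RF T2(2)] by simp_all
  moreover have "antisym W"
    using RF unfolding is_rank_function_def by (simp add: order_on_defs)
  ultimately show False using eq by (metis antisymD)
qed

lemma uncountable_has_interval_embedding:
  assumes "x \<in> A" and "uncountable S" and "S \<subseteq> A"
  shows "\<exists>x'\<in>S. order_embeds (underS L x) (above L x \<inter> underS L x')"
proof -
  obtain b where "b \<in> A" and emb: "order_embeds (underS L x) (above L x \<inter> underS L b)"
    using underS_embeds_interval[OF assms(1)] by blast
  have "\<not> S \<subseteq> under L b"
  proof
    assume "S \<subseteq> under L b"
    then have "countable S" using countable_under by (rule countable_subset)
    with assms(2) show False by contradiction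
  qed
  then obtain x' where "x' \<in> S" and "x' \<notin> under L b" by blast
  then have "(b, x') \<in> L"
    using L_total[OF \<open>b \<in> A\<close>] assms(3) by (auto simp: under_def)
  then have "above L x \<inter> underS L b \<subseteq> above L x \<inter> underS L x'"
    using underS_trans by blast
  then show ?thesis
    using order_embeds_mono[OF emb order.refl] \<open>x' \<in> S\<close> by blast
qed

lemma uncountable_underS_rank_empty:
  assumes RF: "is_rank_function A thresholds W \<rho>"
  shows "uncountable (underS W (\<rho> Map.empty))"
proof
  assume "countable (underS W (\<rho> Map.empty))"
  obtain \<mu> where "\<mu> \<in> A" and least: "\<forall>z\<in>A. (\<mu>, z) \<in> L"
    using exists_least[of A] uncountable_carrier by auto
  let ?D = "A - {\<mu>}"
  have D: "x \<in> A" "underS L x \<noteq> {}" if "x \<in> ?D" for x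
    using that least \<open>\<mu> \<in> A\<close> by (auto simp: underS_def)
  have "\<rho> (root_tree x) \<in> underS W (\<rho> Map.empty)" if "x \<in> ?D" for x
    using is_rank_function_less[OF RF LTree_root(2)[OF D[OF that]]] by (simp add: underS_def)
  then have "(\<lambda>x. \<rho> (root_tree x)) ` ?D \<subseteq> underS W (\<rho> Map.empty)" by blast
  moreover have "uncountable ?D"
    using uncountable_carrier uncountable_minus_countable[of A "{\<mu>}"] by simp
  ultimately have "\<exists>v. uncountable {x \<in> ?D. \<rho> (root_tree x) = v}"
    by (rule uncountable_fiber[OF \<open>countable (underS W (\<rho> Map.empty))\<close>])
  then obtain v where v: "uncountable {x \<in> ?D. \<rho> (root_tree x) = v}" by blast
  then have "{x \<in> ?D. \<rho> (root_tree x) = v} \<noteq> {}" by (metis countable_empty)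
  then obtain x where x: "x \<in> ?D" "\<rho> (root_tree x) = v" by blast
  obtain x' where x': "x' \<in> ?D" "\<rho> (root_tree x') = v"
    and "order_embeds (underS L x) (above L x \<inter> underS L x')"
    using uncountable_has_interval_embedding[OF D(1)[OF x(1)] v] by blast
  then have "\<rho> (root_tree x) \<noteq> \<rho> (root_tree x')"
    using rank_root_tree_less[OF RF D[OF x(1)] D(1)[OF x'(1)]] by blast
  then show False using x(2) x'(2) by simp
qed

end

theorem mainTheorem19:
  fixes lessdot :: "real rel"
  assumes CH: "(card_of (UNIV :: real set), cardSuc natLeq) \<in> ordIso"
    and wo: "well_order_on {0..1} lessdot"
    and otype: "(lessdot, cardSuc natLeq) \<in> ordIso"
  shows "let X = {0..1::real}; H = {(\<lambda>x. (x, z) \<in> lessdot) | z. z \<in> {0..1::real}} in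
           H \<noteq> {} \<and>
           (has_infinite_LTree X H \<or>
            (\<not> has_infinite_LTree X H \<and>
             (\<forall>(W :: 'o rel) \<rho>. is_rank_function X H W \<rho> \<longrightarrow>
                 (cardSuc natLeq, Restr W (underS W (\<rho> Map.empty))) \<in> ordLeq)))"
proof -
  interpret omega1_order "{0..1::real}" lessdot
    using wo otype by unfold_locales
  have "thresholds \<noteq> {}" using uncountable_carrier by (auto simp: thresholds_def)
  moreover have "cardSuc natLeq \<le>o Restr W (underS W (\<rho> Map.empty))"
    if RF: "is_rank_function {0..1} thresholds W \<rho>" for W :: "'o rel" and \<rho>
  proof (rule cardSuc_natLeq_ordLeq_Restr)
    show "Well_order W" using RF by (simp add: is_rank_function_def)
    show "underS W (\<rho> Map.empty) \<subseteq> Field W" by (auto simp: underS_def Field_def)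
    show "uncountable (underS W (\<rho> Map.empty))" by (rule uncountable_underS_rank_empty[OF RF])
  qed
  ultimately show ?thesis
    unfolding Let_def thresholds_def[symmetric]
    using not_has_infinite_LTree by (intro conjI disjI2 allI impI) simp_all
qed

end
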